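(* Let $K=\{x\in[0,1]^n: g_\ell(x)\ge 0,\ \ell=1,\dots,m\}$ with affine $g_\ell$, $V=[n]$, $t>1$, $y\in\mathrm{La}^t(K)$, $k<t$ a positive integer and $S\subseteq V$ such that $y_I=0$ for every $I\in\mathcal P_{2t}(V)$ with $|I\cap S|\ge k$. Let $y'$ be the extension of $y$ (so $y'_I=y_I$ if $|I|\le 2t$ and $y'_I=0$ otherwise), and for $X\subseteq S$ let $z^X_I=\sum_{J:\,X\subseteq J\subseteq S}(-1)^{|J\setminus X|}y'_{I\cup J}$. Then for every $X\subseteq S$: (1) $z^X_\emptyset\ge 0$; (2) if $z^X_\emptyset=0$ then $z^X_I=0$ for every $I\subseteq V$ with $|I|\le 2t-2k$.
   Context: Notation: $\mathcal P_t(U)$ is the set of subsets of $U$ of size at most $t$. For a collection $\mathcal T$ of subsets and a vector $y$ indexed by subsets, $M_{\mathcal T}(y)$ is the symmetric matrix indexed by $\mathcal T$ with $(I,J)$-entry $y_{I\cup J}$. For an affine $g(x)=b+\sum_{j}a_jx_j$, $(g*y)_I=b\,y_I+\sum_j a_j y_{I\cup\{j\}}$. The $t$-th Lasserre lifted polytope $\mathrm{La}^t(K)$ of $K=\{x\in[0,1]^n:g_\ell(x)\ge0,\ \ell=1,\dots,m\}$ is the set of $y\in[0,1]^{\mathcal P_{2t}(V)}$ with $y_\emptyset=1$, $M_{\mathcal P_t(V)}(y)\succeq0$, and $M_{\mathcal P_{t-1}(V)}(g_\ell*y)\succeq0$ for all $\ell$. *)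

theory Defs
  imports Complex_Main
begin

text \<open>Ground set V = [n] = {1..n}; vectors indexed by subsets are functions nat set => real.\<close>

definition Pt :: "nat set \<Rightarrow> nat \<Rightarrow> nat set set" where
  "Pt U t = {I. I \<subseteq> U \<and> card I \<le> t}"

text \<open>Positive semidefiniteness of the symmetric matrix indexed by the finite set T
  with (I,J)-entry y (I \<union> J): its quadratic form is nonnegative.\<close>
definition moment_psd :: "nat set set \<Rightarrow> (nat set \<Rightarrow> real) \<Rightarrow> bool" where
  "moment_psd T y \<longleftrightarrow>
     (\<forall>v :: nat set \<Rightarrow> real. (\<Sum>I\<in>T. \<Sum>J\<in>T. v I * v J * y (I \<union> J)) \<ge> 0)"

text \<open>Affine function g(x) = b + sum_j a_j x_j represented by the pair (b, a).\<close>
definition shift :: "nat \<Rightarrow> real \<times> (nat \<Rightarrow> real) \<Rightarrow> (nat set \<Rightarrow> real) \<Rightarrow> nat set \<Rightarrow> real" where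
  "shift n g y I = fst g * y I + (\<Sum>j\<in>{1..n}. snd g j * y (I \<union> {j}))"

definition Lasserre :: "nat \<Rightarrow> nat \<Rightarrow> (nat \<Rightarrow> real \<times> (nat \<Rightarrow> real)) \<Rightarrow> nat \<Rightarrow> (nat set \<Rightarrow> real) \<Rightarrow> bool" where
  "Lasserre n m g t y \<longleftrightarrow>
     (\<forall>I\<in>Pt {1..n} (2*t). 0 \<le> y I \<and> y I \<le> 1) \<and>
     y {} = 1 \<and>
     moment_psd (Pt {1..n} t) y \<and>
     (\<forall>l\<in>{1..m}. moment_psd (Pt {1..n} (t - 1)) (shift n (g l) y))"

definition ext_vec :: "nat \<Rightarrow> (nat set \<Rightarrow> real) \<Rightarrow> nat set \<Rightarrow> real" where
  "ext_vec t y I = (if card I \<le> 2*t then y I else 0)"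

definition zvec :: "nat \<Rightarrow> (nat set \<Rightarrow> real) \<Rightarrow> nat set \<Rightarrow> nat set \<Rightarrow> nat set \<Rightarrow> real" where
  "zvec t y S X I = (\<Sum>J\<in>{J. X \<subseteq> J \<and> J \<subseteq> S}. (-1) ^ card (J - X) * ext_vec t y (I \<union> J))"

end

theory Submission
  imports Defs "HOL-Library.Disjoint_Sets"
begin

(* Write s_J = (-1)^|J - X| and F = {J. X \<subseteq> J \<subseteq> S, |J| < k}.
   Since y vanishes on sets meeting S in at least k points, only the J \<in> F
   contribute to z^X_I.  For |I| \<le> t - k + 1 the vector a_I = \<Sum>_{J\<in>F} s_J e_{I \<union> J}
   lives on P_t(V), and expanding its moment form gives the Gram identity
   a_I^T M_t(y) a_I' = \<Sum>_{J\<in>F} s_J z^X_{I \<union> I' \<union> J} = z^X_{I \<union> I'}: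
   inclusion-exclusion kills z^X at every set containing a point of S - X, so only
   J = X survives, and X is absorbed.  Hence z^X_\<emptyset> = a_\<emptyset>^T M a_\<emptyset> \<ge> 0, and if it is 0,
   positive semidefiniteness gives a_\<emptyset>^T M a_I = z^X_I = 0 for |I| \<le> t - k and then
   a_I1^T M a_I2 = z^X_{I1 \<union> I2} = 0 for |I1|, |I2| \<le> t - k.  Only the PSD condition
   on M_t(y) is used. *)

section \<open>Moment forms\<close>

definition moment_form :: "nat set set \<Rightarrow> (nat set \<Rightarrow> real) \<Rightarrow> (nat set \<Rightarrow> real) \<Rightarrow> (nat set \<Rightarrow> real) \<Rightarrow> real" where
  "moment_form T y a b = (\<Sum>K\<in>T. \<Sum>L\<in>T. a K * b L * y (K \<union> L))"

text \<open>The form is symmetric because y is indexed by unions.\<close>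
lemma moment_form_sym: "moment_form T y a b = moment_form T y b a"
  unfolding moment_form_def
  by (subst sum.swap) (simp add: Un_commute mult.commute mult.left_commute)

lemma moment_form_line:
  "moment_form T y (\<lambda>K. a K + c * b K) (\<lambda>K. a K + c * b K) =
     moment_form T y a a + 2 * c * moment_form T y a b + c\<^sup>2 * moment_form T y b b"
proof -
  have "\<And>K L. (a K + c * b K) * (a L + c * b L) * y (K \<union> L) =
     a K * a L * y (K \<union> L) + c * (a K * b L * y (K \<union> L)) + c * (b K * a L * y (K \<union> L))
      + c\<^sup>2 * (b K * b L * y (K \<union> L))"
    by (simp add: algebra_simps power2_eq_square)
  then have "moment_form T y (\<lambda>K. a K + c * b K) (\<lambda>K. a K + c * b K) =
     moment_form T y a a + c * moment_form T y a b + c * moment_form T y b a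
      + c\<^sup>2 * moment_form T y b b"
    unfolding moment_form_def by (simp add: sum.distrib sum_distrib_left)
  then show ?thesis using moment_form_sym[of T y b a] by simp
qed

lemma nonneg_quadratic_linear_coeff:
  fixes \<beta> d :: real
  assumes "d \<ge> 0" and nonneg: "\<And>c. 0 \<le> 2 * c * \<beta> + c\<^sup>2 * d"
  shows "\<beta> = 0"
proof -
  define c where "c = - \<beta> / (d + 1)"
  have "0 \<le> (2 * c * \<beta> + c\<^sup>2 * d) * (d + 1)\<^sup>2"
    using nonneg[of c] by simp
  also have "\<dots> = 2 * \<beta> * (c * (d + 1)) * (d + 1) + (c * (d + 1))\<^sup>2 * d"
    by (simp add: algebra_simps power2_eq_square)
  also have "c * (d + 1) = - \<beta>"
    using \<open>d \<ge> 0\<close> unfolding c_def by simp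
  also have "2 * \<beta> * - \<beta> * (d + 1) + (- \<beta>)\<^sup>2 * d = - \<beta>\<^sup>2 * (d + 2)"
    by (simp add: algebra_simps power2_eq_square)
  finally have "\<beta>\<^sup>2 * (d + 2) \<le> 0" by simp
  with \<open>d \<ge> 0\<close> have "\<beta>\<^sup>2 \<le> 0" by (simp add: mult_le_0_iff)
  then show ?thesis by simp
qed

lemma moment_psd_orthogonal:
  assumes psd: "moment_psd T y" and null: "moment_form T y a a = 0"
  shows "moment_form T y a b = 0"
proof (rule nonneg_quadratic_linear_coeff)
  have nonneg: "\<And>v. moment_form T y v v \<ge> 0"
    using psd unfolding moment_psd_def moment_form_def by blast
  show "moment_form T y b b \<ge> 0" by (rule nonneg)
  fix c
  show "0 \<le> 2 * c * moment_form T y a b + c\<^sup>2 * moment_form T y b b"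
    using nonneg[of "\<lambda>K. a K + c * b K"] null by (simp add: moment_form_line)
qed

text \<open>The pushforward of coefficients c on F along f: the vector
  \<Sum>_{J\<in>F} c_J e_{f J}.\<close>
definition pushforward :: "'a set \<Rightarrow> ('a \<Rightarrow> nat set) \<Rightarrow> ('a \<Rightarrow> real) \<Rightarrow> nat set \<Rightarrow> real" where
  "pushforward F f c K = sum c {J \<in> F. f J = K}"

lemma sum_pushforward:
  assumes "finite F" "finite T" "f ` F \<subseteq> T"
  shows "(\<Sum>K\<in>T. pushforward F f c K * h K) = (\<Sum>J\<in>F. c J * h (f J))"
proof -
  have "(\<Sum>K\<in>T. pushforward F f c K * h K) = (\<Sum>K\<in>T. \<Sum>J\<in>{J \<in> F. f J = K}. c J * h (f J))"
    unfolding pushforward_def sum_distrib_right by (intro sum.cong) auto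
  also have "\<dots> = (\<Sum>J\<in>F. c J * h (f J))"
    by (rule sum.group[OF assms])
  finally show ?thesis .
qed

lemma moment_form_pushforward:
  assumes "finite T" "finite F" "finite G" "f ` F \<subseteq> T" "g ` G \<subseteq> T"
  shows "moment_form T y (pushforward F f c) (pushforward G g d) =
           (\<Sum>J\<in>F. \<Sum>J'\<in>G. c J * d J' * y (f J \<union> g J'))"
proof -
  have "moment_form T y (pushforward F f c) (pushforward G g d) =
          (\<Sum>K\<in>T. pushforward F f c K * (\<Sum>L\<in>T. pushforward G g d L * y (K \<union> L)))"
    unfolding moment_form_def by (simp add: sum_distrib_left mult.assoc)
  also have "\<dots> = (\<Sum>J\<in>F. c J * (\<Sum>L\<in>T. pushforward G g d L * y (f J \<union> L)))"
    using assms by (simp add: sum_pushforward)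
  also have "\<dots> = (\<Sum>J\<in>F. c J * (\<Sum>J'\<in>G. d J' * y (f J \<union> g J')))"
    using assms by (simp add: sum_pushforward)
  finally show ?thesis by (simp add: sum_distrib_left mult.assoc)
qed

section \<open>Inclusion-exclusion vectors\<close>

definition alt_sign :: "nat set \<Rightarrow> nat set \<Rightarrow> real" where
  "alt_sign X J = (-1) ^ card (J - X)"

lemma zvec_alt_sign:
  "zvec t y S X I = (\<Sum>J\<in>{J. X \<subseteq> J \<and> J \<subseteq> S}. alt_sign X J * ext_vec t y (I \<union> J))"
  unfolding zvec_def alt_sign_def ..

lemma alt_sign_insert:
  assumes "finite J" "i \<notin> J" "i \<notin> X"
  shows "alt_sign X (insert i J) = - alt_sign X J"
proof -
  have "insert i J - X = insert i (J - X)" using assms(3) by blast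
  then show ?thesis using assms(1,2) unfolding alt_sign_def by simp
qed

text \<open>Indices of X are absorbed by every J in the sum.\<close>
lemma zvec_absorb: "zvec t y S X (I \<union> X) = zvec t y S X I"
proof -
  have "\<And>J. X \<subseteq> J \<Longrightarrow> I \<union> X \<union> J = I \<union> J" by blast
  then show ?thesis unfolding zvec_def by simp
qed

text \<open>Inclusion-exclusion cancellation: if the argument already contains an index
  i \<in> S - X, adding or removing i from J flips the sign but not the term.\<close>
lemma zvec_cancel:
  assumes "finite S" "i \<in> S" "i \<notin> X" "i \<in> I"
  shows "zvec t y S X I = 0"
  unfolding zvec_alt_sign
proof (rule sum_involution_eq_0)
  define toggle where "toggle J = (if i \<in> J then J - {i} else insert i J)" for J :: "nat set"
  let ?G = "{J. X \<subseteq> J \<and> J \<subseteq> S}"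
  let ?f = "\<lambda>J. alt_sign X J * ext_vec t y (I \<union> J)"
  have flip: "?f (insert i J) + ?f J = 0" if "J \<subseteq> S" "i \<notin> J" for J
  proof -
    have "finite J" using \<open>finite S\<close> \<open>J \<subseteq> S\<close> finite_subset by blast
    moreover have "I \<union> insert i J = I \<union> J" using \<open>i \<in> I\<close> by blast
    ultimately show ?thesis using that assms(3) by (simp add: alt_sign_insert)
  qed
  fix J assume J: "J \<in> ?G"
  show "?f (toggle J) + ?f J = 0"
  proof (cases "i \<in> J")
    case True
    then obtain J' where J': "J = insert i J'" "i \<notin> J'" by (meson Set.set_insert)
    then have "toggle J = J'" unfolding toggle_def by simp
    then show ?thesis using flip[of J'] J J' by (simp add: add.commute)
  next
    case False
    then show ?thesis using flip J unfolding toggle_def by simp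
  qed
  show "toggle J \<in> ?G" using J assms(2,3) unfolding toggle_def by auto
  show "toggle (toggle J) = J" unfolding toggle_def by (simp add: insert_absorb)
  show "toggle J \<noteq> J" unfolding toggle_def by auto
qed

text \<open>The supersets of X in S of size below k, the only ones contributing to z^X
  when y vanishes on sets meeting S in at least k points.\<close>
definition small_supersets :: "nat set \<Rightarrow> nat set \<Rightarrow> nat \<Rightarrow> nat set set" where
  "small_supersets S X k = {J. X \<subseteq> J \<and> J \<subseteq> S \<and> card J < k}"

lemma finite_small_supersets: "finite S \<Longrightarrow> finite (small_supersets S X k)"
  unfolding small_supersets_def by (rule finite_subset[of _ "Pow S"]) auto

lemma small_supersets_empty:
  assumes "finite S" "k \<le> card X"
  shows "small_supersets S X k = {}"
proof (rule equals0I)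
  fix J assume "J \<in> small_supersets S X k"
  then have "X \<subseteq> J" "J \<subseteq> S" "card J < k" unfolding small_supersets_def by auto
  then show False
    using card_mono[OF finite_subset[OF \<open>J \<subseteq> S\<close> assms(1)] \<open>X \<subseteq> J\<close>] assms(2) by linarith
qed

lemma zvec_small_supersets:
  assumes "finite S"
    and heavy: "\<And>J. X \<subseteq> J \<Longrightarrow> J \<subseteq> S \<Longrightarrow> k \<le> card J \<Longrightarrow> ext_vec t y (I \<union> J) = 0"
  shows "zvec t y S X I = (\<Sum>J\<in>small_supersets S X k. alt_sign X J * ext_vec t y (I \<union> J))"
  unfolding zvec_alt_sign
proof (rule sum.mono_neutral_right)
  have "{J. X \<subseteq> J \<and> J \<subseteq> S} \<subseteq> Pow S" by blast
  then show "finite {J. X \<subseteq> J \<and> J \<subseteq> S}" using assms(1) finite_subset by blast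
  show "\<forall>J\<in>{J. X \<subseteq> J \<and> J \<subseteq> S} - small_supersets S X k. alt_sign X J * ext_vec t y (I \<union> J) = 0"
  proof
    fix J assume "J \<in> {J. X \<subseteq> J \<and> J \<subseteq> S} - small_supersets S X k"
    then have "X \<subseteq> J" "J \<subseteq> S" "k \<le> card J" unfolding small_supersets_def by auto
    then show "alt_sign X J * ext_vec t y (I \<union> J) = 0" using heavy by simp
  qed
qed (auto simp: small_supersets_def)

text \<open>Summing z^X_{I \<union> J} against the signs over J \<in> F only keeps J = X.\<close>
lemma zvec_collapse:
  assumes "finite S" "X \<subseteq> S" "card X < k"
  shows "(\<Sum>J\<in>small_supersets S X k. alt_sign X J * zvec t y S X (I \<union> J)) = zvec t y S X I"
proof -
  have X: "X \<in> small_supersets S X k" using assms(2,3) unfolding small_supersets_def by blast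
  have rest: "alt_sign X J * zvec t y S X (I \<union> J) = 0" if "J \<in> small_supersets S X k - {X}" for J
  proof -
    have "X \<subseteq> J" "J \<subseteq> S" "J \<noteq> X" using that unfolding small_supersets_def by auto
    then obtain i where "i \<in> J" "i \<notin> X" "i \<in> S" by blast
    then show ?thesis using zvec_cancel[OF assms(1)] by simp
  qed
  have "(\<Sum>J\<in>small_supersets S X k. alt_sign X J * zvec t y S X (I \<union> J))
          = alt_sign X X * zvec t y S X (I \<union> X)
            + (\<Sum>J\<in>small_supersets S X k - {X}. alt_sign X J * zvec t y S X (I \<union> J))"
    by (rule sum.remove[OF finite_small_supersets[OF assms(1)] X])
  also have "(\<Sum>J\<in>small_supersets S X k - {X}. alt_sign X J * zvec t y S X (I \<union> J)) = 0"
    using rest by (intro sum.neutral ballI)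
  finally show ?thesis by (simp add: alt_sign_def zvec_absorb)
qed

section \<open>The Gram identity\<close>

lemma finite_Pt: "finite U \<Longrightarrow> finite (Pt U t)"
  unfolding Pt_def by (rule finite_subset[of _ "Pow U"]) auto

lemma ext_vec_Pt_union:
  assumes "A \<in> Pt U t" "B \<in> Pt U t"
  shows "ext_vec t y (A \<union> B) = y (A \<union> B)"
proof -
  have "card (A \<union> B) \<le> card A + card B" by (rule card_Un_le)
  then show ?thesis using assms unfolding ext_vec_def Pt_def by simp
qed

lemma ext_vec_heavy:
  assumes S: "S \<subseteq> {1..n}" and vanish: "\<forall>I\<in>Pt {1..n} (2*t). card (I \<inter> S) \<ge> k \<longrightarrow> y I = 0"
    and "I \<subseteq> {1..n}" "J \<subseteq> S" "k \<le> card J"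
  shows "ext_vec t y (I \<union> J) = 0"
proof (cases "card (I \<union> J) \<le> 2*t")
  case True
  have "card J \<le> card ((I \<union> J) \<inter> S)"
    using S \<open>J \<subseteq> S\<close> by (intro card_mono) (auto intro: finite_subset)
  then have "y (I \<union> J) = 0"
    using vanish True assms(3-5) S unfolding Pt_def by auto
  then show ?thesis unfolding ext_vec_def by simp
qed (simp add: ext_vec_def)

lemma union_small_in_Pt:
  assumes "S \<subseteq> {1..n}" "I \<subseteq> {1..n}" "card I + k \<le> t + 1" "J \<in> small_supersets S X k"
  shows "I \<union> J \<in> Pt {1..n} t"
proof -
  have "J \<subseteq> {1..n}" "card J < k" using assms(1,4) unfolding small_supersets_def by auto
  moreover have "card (I \<union> J) \<le> card I + card J" by (rule card_Un_le)
  ultimately show ?thesis using assms(2,3) unfolding Pt_def by auto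
qed

definition gram_vec :: "nat set \<Rightarrow> nat set \<Rightarrow> nat \<Rightarrow> nat set \<Rightarrow> nat set \<Rightarrow> real" where
  "gram_vec S X k I = pushforward (small_supersets S X k) (\<lambda>J. I \<union> J) (alt_sign X)"

lemma zvec_gram:
  assumes S: "S \<subseteq> {1..n}" and vanish: "\<forall>I\<in>Pt {1..n} (2*t). card (I \<inter> S) \<ge> k \<longrightarrow> y I = 0"
    and X: "X \<subseteq> S" "card X < k"
    and I1: "I1 \<subseteq> {1..n}" "card I1 + k \<le> t + 1"
    and I2: "I2 \<subseteq> {1..n}" "card I2 + k \<le> t + 1"
  shows "moment_form (Pt {1..n} t) y (gram_vec S X k I1) (gram_vec S X k I2) = zvec t y S X (I1 \<union> I2)"
proof -
  let ?T = "Pt {1..n} t" and ?F = "small_supersets S X k" and ?s = "alt_sign X"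
  have finS: "finite S" using S finite_subset by blast
  have in1: "(\<lambda>J. I1 \<union> J) ` ?F \<subseteq> ?T" and in2: "(\<lambda>J. I2 \<union> J) ` ?F \<subseteq> ?T"
    using union_small_in_Pt[OF S] I1 I2 by auto
  have "moment_form ?T y (gram_vec S X k I1) (gram_vec S X k I2)
          = (\<Sum>J1\<in>?F. \<Sum>J2\<in>?F. ?s J1 * ?s J2 * y (I1 \<union> J1 \<union> (I2 \<union> J2)))"
    unfolding gram_vec_def
    by (rule moment_form_pushforward[OF finite_Pt _ _ in1 in2]) (simp_all add: finite_small_supersets finS)
  also have "\<dots> = (\<Sum>J1\<in>?F. ?s J1 * (\<Sum>J2\<in>?F. ?s J2 * ext_vec t y (I1 \<union> I2 \<union> J1 \<union> J2)))"
  proof (unfold sum_distrib_left, intro sum.cong refl)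
    fix J1 J2 assume "J1 \<in> ?F" "J2 \<in> ?F"
    then have "ext_vec t y (I1 \<union> J1 \<union> (I2 \<union> J2)) = y (I1 \<union> J1 \<union> (I2 \<union> J2))"
      using in1 in2 by (intro ext_vec_Pt_union) auto
    moreover have "I1 \<union> I2 \<union> J1 \<union> J2 = I1 \<union> J1 \<union> (I2 \<union> J2)" by blast
    ultimately show "?s J1 * ?s J2 * y (I1 \<union> J1 \<union> (I2 \<union> J2))
                       = ?s J1 * (?s J2 * ext_vec t y (I1 \<union> I2 \<union> J1 \<union> J2))" by simp
  qed
  also have "\<dots> = (\<Sum>J1\<in>?F. ?s J1 * zvec t y S X (I1 \<union> I2 \<union> J1))"
  proof (intro sum.cong refl arg_cong2[where f = "(*)"])
    fix J1 assume "J1 \<in> ?F"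
    then have "I1 \<union> I2 \<union> J1 \<subseteq> {1..n}" using I1 I2 S unfolding small_supersets_def by auto
    then show "(\<Sum>J2\<in>?F. ?s J2 * ext_vec t y (I1 \<union> I2 \<union> J1 \<union> J2)) = zvec t y S X (I1 \<union> I2 \<union> J1)"
      using ext_vec_heavy[OF S vanish] by (intro zvec_small_supersets[OF finS, symmetric]) auto
  qed
  also have "\<dots> = zvec t y S X (I1 \<union> I2)"
    using zvec_collapse[OF finS X] by simp
  finally show ?thesis .
qed

section \<open>Vanishing and positivity of z^X\<close>

text \<open>If |X| \<ge> k there are no small supersets, so z^X vanishes identically on V.\<close>
lemma zvec_large_X:
  assumes S: "S \<subseteq> {1..n}" and vanish: "\<forall>I\<in>Pt {1..n} (2*t). card (I \<inter> S) \<ge> k \<longrightarrow> y I = 0"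
    and "k \<le> card X" "I \<subseteq> {1..n}"
  shows "zvec t y S X I = 0"
proof -
  have finS: "finite S" using S finite_subset by blast
  have "zvec t y S X I = (\<Sum>J\<in>small_supersets S X k. alt_sign X J * ext_vec t y (I \<union> J))"
    using ext_vec_heavy[OF S vanish \<open>I \<subseteq> {1..n}\<close>] by (intro zvec_small_supersets[OF finS])
  then show ?thesis using small_supersets_empty[OF finS \<open>k \<le> card X\<close>] by simp
qed

lemma split_card_half:
  assumes "finite I" "card I \<le> 2 * q"
  obtains I1 I2 where "I = I1 \<union> I2" "card I1 \<le> q" "card I2 \<le> q"
proof -
  obtain I1 where I1: "I1 \<subseteq> I" "card I1 = min q (card I)"
    using obtain_subset_with_card_n[of "min q (card I)" I] by auto
  have "card (I - I1) = card I - card I1"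
    using I1 assms(1) by (intro card_Diff_subset) (auto intro: finite_subset)
  then have "card (I - I1) \<le> q" using I1 assms(2) by auto
  moreover have "I = I1 \<union> (I - I1)" "card I1 \<le> q" using I1 by auto
  ultimately show ?thesis by (intro that)
qed

text \<open>Suppose z is represented by the Gram vectors a_I (|I| \<le> q) of a PSD moment
  matrix, z_{I1 \<union> I2} = a_I1^T M a_I2.  Then z_\<emptyset> = 0 forces z to vanish on all sets of
  size at most 2q: first a_\<emptyset> \<perp> a_I1 gives z_I1 = 0, i.e. a_I1 is null, and then
  a_I1 \<perp> a_I2.\<close>
lemma psd_gram_kernel:
  fixes a :: "nat set \<Rightarrow> nat set \<Rightarrow> real" and z :: "nat set \<Rightarrow> real"
  assumes psd: "moment_psd T y"
    and gram: "\<And>I1 I2. I1 \<subseteq> U \<Longrightarrow> I2 \<subseteq> U \<Longrightarrow> card I1 \<le> q \<Longrightarrow> card I2 \<le> q \<Longrightarrow>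
                 moment_form T y (a I1) (a I2) = z (I1 \<union> I2)"
    and null: "z {} = 0" and I: "finite U" "I \<subseteq> U" "card I \<le> 2 * q"
  shows "z I = 0"
proof -
  have "finite I" using I finite_subset by auto
  then obtain I1 I2 where split: "I = I1 \<union> I2" "card I1 \<le> q" "card I2 \<le> q"
    using I(3) by (rule split_card_half)
  have sub: "I1 \<subseteq> U" "I2 \<subseteq> U" using I split by auto
  have "moment_form T y (a {}) (a {}) = 0" using gram[of "{}" "{}"] null by simp
  then have "moment_form T y (a {}) (a I1) = 0" by (rule moment_psd_orthogonal[OF psd])
  then have "moment_form T y (a I1) (a I1) = 0" using gram[of "{}" I1] gram[of I1 I1] sub split by simp
  then have "moment_form T y (a I1) (a I2) = 0" by (rule moment_psd_orthogonal[OF psd])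
  then show ?thesis using gram[of I1 I2] sub split by simp
qed

theorem mainTheorem8:
  fixes n m t k :: nat and g :: "nat \<Rightarrow> real \<times> (nat \<Rightarrow> real)"
    and y :: "nat set \<Rightarrow> real" and S :: "nat set"
  assumes "t > 1"
    and "Lasserre n m g t y"
    and "0 < k" and "k < t"
    and "S \<subseteq> {1..n}"
    and "\<forall>I\<in>Pt {1..n} (2*t). card (I \<inter> S) \<ge> k \<longrightarrow> y I = 0"
  shows "\<forall>X. X \<subseteq> S \<longrightarrow>
           zvec t y S X {} \<ge> 0 \<and>
           (zvec t y S X {} = 0 \<longrightarrow>
              (\<forall>I. I \<subseteq> {1..n} \<and> card I \<le> 2*t - 2*k \<longrightarrow> zvec t y S X I = 0))"
proof (intro allI impI)
  fix X assume "X \<subseteq> S"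
  show "zvec t y S X {} \<ge> 0 \<and> (zvec t y S X {} = 0 \<longrightarrow>
          (\<forall>I. I \<subseteq> {1..n} \<and> card I \<le> 2*t - 2*k \<longrightarrow> zvec t y S X I = 0))"
  proof (cases "card X < k")
    case False
    then show ?thesis using zvec_large_X[OF assms(5,6)] by simp
  next
    case True
    let ?M = "moment_form (Pt {1..n} t) y" and ?a = "gram_vec S X k"
    have psd: "moment_psd (Pt {1..n} t) y" using assms(2) unfolding Lasserre_def by blast
    have gram: "?M (?a I1) (?a I2) = zvec t y S X (I1 \<union> I2)"
      if "I1 \<subseteq> {1..n}" "I2 \<subseteq> {1..n}" "card I1 \<le> t - k" "card I2 \<le> t - k" for I1 I2
      using that assms(4) by (intro zvec_gram[OF assms(5,6) \<open>X \<subseteq> S\<close> True]) auto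
    have "zvec t y S X {} = ?M (?a {}) (?a {})" using gram[of "{}" "{}"] by simp
    moreover have "?M (?a {}) (?a {}) \<ge> 0" using psd unfolding moment_psd_def moment_form_def by blast
    moreover have "zvec t y S X I = 0"
      if "zvec t y S X {} = 0" "I \<subseteq> {1..n}" "card I \<le> 2*t - 2*k" for I
      using psd_gram_kernel[where a = ?a and z = "zvec t y S X" and U = "{1..n}" and q = "t - k", OF psd gram] that by simp
    ultimately show ?thesis by simp
  qed
qed

end
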